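(* Let $A \in \mathbb{R}^{n\times d}$, $b \in \mathbb{R}^n$ with $Ax=b$ consistent. Let $\lbrace W_1,\ldots,W_N\rbrace \subset \mathbb{R}^n$ and let $w$ be a random variable with $\mathbb{P}[w = W_j] > 0$ for $j=1,\ldots,N$ and $\sum_{j=1}^N \mathbb{P}[w = W_j] = 1$. Let $\lbrace w_l : l \geq 0\rbrace$ be sampled from $\lbrace W_1,\ldots,W_N\rbrace$ without replacement, and once the set is exhausted it is repopulated with its original elements and sampling without replacement is repeated. Let $\mathcal{R}(w) = \mathcal{N}(w)^\perp$ where $\mathcal{N}(w) = \mathrm{span}\lbrace z\in\mathbb{R}^d : \mathbb{P}[z'A'w=0]=1\rbrace$, and $T = \min\lbrace k\geq 0 : \mathrm{span}\lbrace A'w_0,\ldots,A'w_k\rbrace \supset \mathcal{R}(w)\rbrace$. For $x_0 \in \mathbb{R}^d$ and $S_0 = I_d$ define for $l \geq 0$ $$x_{l+1} = \begin{cases} x_l + \dfrac{S_l A' w_l w_l'(b - A x_l)}{w_l' A S_l A' w_l} & S_l A'w_l \neq 0,\\ x_l & \text{otherwise,}\end{cases}\qquad S_{l+1} = \begin{cases} S_l - \dfrac{S_l A' w_l w_l' A S_l}{w_l' A S_l A' w_l} & S_l A' w_l \neq 0,\\ S_l & \text{otherwise.}\end{cases}$$ Then $T \leq N-1$. Moreover, $Ax_{T+1} = b$ for every initialization $x_0$ if $\mathrm{span}\lbrace A'W_1,\ldots,A'W_N\rbrace = \mathrm{row}(A)$, and this holds if $\mathrm{span}\lbrace W_1,\ldots,W_N\rbrace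 = \mathbb{R}^n$.
   Context: $\mathrm{row}(A)$ is the row space of $A$; $A'$ is the transpose. *)

theory Defs
  imports "HOL-Analysis.Analysis" "HOL-Probability.Probability"
begin

definition row_space :: "real^'d^'n \<Rightarrow> (real^'d) set" where
  "row_space A = span (rows A)"

definition null_sp :: "(real^'n) pmf \<Rightarrow> real^'d^'n \<Rightarrow> (real^'d) set" where
  "null_sp p A = span {z. measure_pmf.prob p {v. z \<bullet> (transpose A *v v) = 0} = 1}"

definition range_sp :: "(real^'n) pmf \<Rightarrow> real^'d^'n \<Rightarrow> (real^'d) set" where
  "range_sp p A = orthogonal_comp (null_sp p A)"

definition stop_time :: "(real^'n) pmf \<Rightarrow> real^'d^'n \<Rightarrow> (nat \<Rightarrow> real^'n) \<Rightarrow> nat" where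
  "stop_time p A w = (LEAST k. range_sp p A \<subseteq> span ((\<lambda>l. transpose A *v w l) ` {..k}))"

text \<open>The iteration (x_l, S_l), with x_0 given and S_0 = I_d.
  Denominator w_l' A S_l A' w_l = w_l \<bullet> (A (S_l A' w_l));
  the row vector w_l' A S_l has entries (S_l' A' w_l)_j.\<close>
fun iter :: "real^'d^'n \<Rightarrow> real^'n \<Rightarrow> (nat \<Rightarrow> real^'n) \<Rightarrow> real^'d \<Rightarrow> nat
             \<Rightarrow> (real^'d) \<times> (real^'d^'d)" where
  "iter A b w x0 0 = (x0, mat 1)"
| "iter A b w x0 (Suc l) =
     (let (x, S) = iter A b w x0 l;
          u = S *v (transpose A *v w l);
          r = transpose S *v (transpose A *v w l);
          den = w l \<bullet> (A *v u)
      in if u \<noteq> 0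
         then (x + ((w l \<bullet> (b - A *v x)) / den) *\<^sub>R u,
               S - (\<chi> i j. u $ i * r $ j / den))
         else (x, S))"

end

theory Submission
  imports Defs
begin

text \<open>The matrix \<open>S\<^sub>l\<close> is the orthogonal projector onto the orthogonal complement of
  \<open>span {A'w\<^sub>0, \<dots>, A'w\<^sub>l\<^sub>-\<^sub>1}\<close>, and every update moves \<open>x\<^sub>l\<close> within the range of \<open>S\<^sub>l\<close> so that
  \<open>x\<^sub>l\<^sub>+\<^sub>1 - x\<^sup>*\<close> stays orthogonal to all directions seen so far, \<open>x\<^sup>*\<close> being any solution.
  The range \<open>\<R>(w)\<close> is the span of the \<open>A'W\<^sub>j\<close>, so it is exhausted after the first sweep of
  \<open>N\<close> samples, i.e. \<open>T \<le> N - 1\<close>; and once it contains the row space, \<open>x\<^sub>T\<^sub>+\<^sub>1 - x\<^sup>*\<close> is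
  orthogonal to every row of \<open>A\<close>.\<close>

lemma span_inner_eq_0:
  fixes a :: "'a::real_inner"
  assumes "y \<in> span B" and "\<And>z. z \<in> B \<Longrightarrow> z \<bullet> a = 0"
  shows "y \<bullet> a = 0"
  using orthogonal_to_span[of y B a] assms by (simp add: orthogonal_def inner_commute)

lemma orthogonal_comp_span: "(span V)\<^sup>\<bottom> = V\<^sup>\<bottom>"
proof
  show "(span V)\<^sup>\<bottom> \<subseteq> V\<^sup>\<bottom>"
    by (intro orthogonal_comp_anti_mono span_superset)
  show "V\<^sup>\<bottom> \<subseteq> (span V)\<^sup>\<bottom>"
    using span_inner_eq_0[of _ V] by (auto simp: orthogonal_comp_def orthogonal_def)
qed

lemma range_transpose_mult_eq_row_space:
  fixes A :: "real^'d^'n"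
  shows "range (\<lambda>x. transpose A *v x) = row_space A"
proof
  show "range (\<lambda>x. transpose A *v x) \<subseteq> row_space A"
    using matrix_vector_mult_in_columnspace[of "transpose A"]
    by (auto simp: row_space_def simp del: transpose_matrix_vector)
  have "columns (transpose A) \<subseteq> range (\<lambda>x. transpose A *v x)"
    by (auto simp: columns_image_basis simp del: transpose_matrix_vector columns_transpose)
  then show "row_space A \<subseteq> range (\<lambda>x. transpose A *v x)"
    unfolding row_space_def columns_transpose[symmetric]
    by (intro span_minimal linear_subspace_image subspace_UNIV matrix_vector_mul_linear)
qed

lemma span_transpose_image_eq_row_space:
  fixes A :: "real^'d^'n"
  assumes "span W = UNIV"
  shows "span ((\<lambda>x. transpose A *v x) ` W) = row_space A"
  using linear_span_image[OF matrix_vector_mul_linear, of "transpose A" W] assms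
  by (simp add: range_transpose_mult_eq_row_space del: transpose_matrix_vector)

lemma inner_mult_vector_transpose:
  fixes A :: "real^'d^'n"
  shows "x \<bullet> (A *v y) = (transpose A *v x) \<bullet> y"
  by (simp add: dot_lmul_matrix)

lemma symmetric_matrix_inner:
  fixes S :: "real^'d^'d"
  assumes "transpose S = S"
  shows "(S *v y) \<bullet> z = y \<bullet> (S *v z)"
  by (metis assms dot_lmul_matrix inner_commute transpose_matrix_vector)

lemma outer_product_mult_vector:
  fixes u r :: "real^'d"
  shows "(\<chi> i j. u $ i * r $ j / c) *v z = ((r \<bullet> z) / c) *\<^sub>R u"
  by (simp add: vec_eq_iff matrix_vector_mult_def inner_vec_def sum_divide_distrib
      sum_distrib_left algebra_simps)

definition perp_projector :: "real^'d^'d \<Rightarrow> (real^'d) set \<Rightarrow> bool" where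
  "perp_projector S V \<longleftrightarrow>
     transpose S = S \<and> (\<forall>v\<in>V. S *v v = 0) \<and> (\<forall>z. z - S *v z \<in> span V)"

lemma perp_projector_mat_1: "perp_projector (mat 1) {}"
  by (simp add: perp_projector_def)

lemma perp_projector_orthogonal:
  assumes "perp_projector S V" and "y \<in> span V"
  shows "(S *v z) \<bullet> y = 0"
proof -
  have "y \<bullet> (S *v z) = 0"
  proof (rule span_inner_eq_0[OF \<open>y \<in> span V\<close>])
    fix v assume "v \<in> V"
    then show "v \<bullet> (S *v z) = 0"
      using assms(1) symmetric_matrix_inner[of S v z] by (simp add: perp_projector_def)
  qed
  then show ?thesis by (simp add: inner_commute)
qed

lemma perp_projector_inner_self:
  assumes "perp_projector S V"
  shows "v \<bullet> (S *v v) = (S *v v) \<bullet> (S *v v)"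
proof -
  have "(S *v v) \<bullet> (v - S *v v) = 0"
    using assms perp_projector_orthogonal[OF assms, of "v - S *v v" v]
    by (simp add: perp_projector_def)
  then show ?thesis by (metis eq_iff_diff_eq_0 inner_commute inner_diff_right)
qed

lemma perp_projector_insert_degenerate:
  assumes "perp_projector S V" and "S *v v = 0"
  shows "perp_projector S (insert v V)"
  using assms span_mono[of V "insert v V"] by (auto simp: perp_projector_def)

lemma perp_projector_insert:
  fixes S :: "real^'d^'d"
  assumes P: "perp_projector S V" and u: "u = S *v v" "u \<noteq> 0"
  shows "perp_projector (S - (\<chi> i j. u $ i * u $ j / (u \<bullet> u))) (insert v V)"
proof -
  let ?M = "\<chi> i j. u $ i * u $ j / (u \<bullet> u)"
  have M: "?M *v z = ((u \<bullet> z) / (u \<bullet> u)) *\<^sub>R u" for z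
    by (rule outer_product_mult_vector)
  have sym: "transpose (S - ?M) = S - ?M"
    using P by (simp add: perp_projector_def vec_eq_iff transpose_def mult.commute)
  have "(S - ?M) *v y = 0" if "y \<in> insert v V" for y
  proof (cases "y = v")
    case True
    have "u \<bullet> v = u \<bullet> u"
      using perp_projector_inner_self[OF P, of v] u by (simp add: inner_commute)
    then show ?thesis
      using True by (simp add: M matrix_vector_mult_diff_rdistrib u(1)[symmetric])
  next
    case False
    then have "u \<bullet> y = 0" "S *v y = 0"
      using that P u perp_projector_orthogonal[OF P span_base]
      by (auto simp: perp_projector_def)
    then show ?thesis by (simp add: M matrix_vector_mult_diff_rdistrib)
  qed
  moreover have "z - (S - ?M) *v z \<in> span (insert v V)" for z
  proof -
    have dec: "z - (S - ?M) *v z = (z - S *v z) + ((u \<bullet> z) / (u \<bullet> u)) *\<^sub>R u"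
      by (simp add: M matrix_vector_mult_diff_rdistrib)
    have Sz: "z - S *v z \<in> span (insert v V)" and vu: "v - u \<in> span (insert v V)"
      using P u(1) span_mono[of V "insert v V"] by (auto simp: perp_projector_def)
    have "v - (v - u) \<in> span (insert v V)"
      by (rule span_diff[OF span_base vu]) simp
    then have "u \<in> span (insert v V)" by simp
    with Sz show ?thesis unfolding dec by (intro span_add span_scale)
  qed
  ultimately show ?thesis using sym by (simp add: perp_projector_def)
qed

lemma iter_Suc_degenerate:
  assumes "iter A b w x0 l = (x, S)" and "S *v (transpose A *v w l) = 0"
  shows "iter A b w x0 (Suc l) = (x, S)"
  using assms by (simp add: Let_def)

lemma iter_Suc_perp_projector:
  fixes A :: "real^'d^'n"
  assumes "iter A b w x0 l = (x, S)" and P: "perp_projector S V"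
    and u: "u = S *v (transpose A *v w l)" "u \<noteq> 0"
  shows "iter A b w x0 (Suc l) =
    (x + ((w l \<bullet> (b - A *v x)) / (u \<bullet> u)) *\<^sub>R u, S - (\<chi> i j. u $ i * u $ j / (u \<bullet> u)))"
proof -
  have "w l \<bullet> (A *v u) = u \<bullet> u"
    using perp_projector_inner_self[OF P, of "transpose A *v w l"] u(1)
    unfolding inner_mult_vector_transpose[of "w l"] by simp
  moreover have "transpose S = S" using P by (simp add: perp_projector_def)
  ultimately show ?thesis using assms by (simp add: Let_def del: transpose_matrix_vector)
qed

lemma iter_invariant:
  fixes A :: "real^'d^'n" and w :: "nat \<Rightarrow> real^'n"
  assumes sol: "A *v xs = b"
  defines "v \<equiv> \<lambda>k. transpose A *v w k"
  shows "iter A b w x0 l = (x, S) \<Longrightarrow>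
    perp_projector S (v ` {..<l}) \<and> (\<forall>k<l. v k \<bullet> x = v k \<bullet> xs)"
proof (induction l arbitrary: x S)
  case 0
  then show ?case by (auto simp: perp_projector_mat_1)
next
  case (Suc l)
  obtain x1 S1 where it: "iter A b w x0 l = (x1, S1)" by fastforce
  from Suc.IH[OF it] have P: "perp_projector S1 (v ` {..<l})"
    and xinv: "\<forall>k<l. v k \<bullet> x1 = v k \<bullet> xs" by blast+
  have V: "v ` {..<Suc l} = insert (v l) (v ` {..<l})" by (simp add: lessThan_Suc)
  define u where "u = S1 *v v l"
  show ?case
  proof (cases "u = 0")
    case True
    then have "(x, S) = (x1, S1)"
      using iter_Suc_degenerate[OF it] Suc.prems by (simp add: u_def v_def)
    moreover have "v l \<bullet> (x1 - xs) = 0"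
    proof (rule span_inner_eq_0)
      show "v l \<in> span (v ` {..<l})"
        using P True unfolding perp_projector_def u_def by (metis diff_zero)
    qed (use xinv in \<open>auto simp: inner_diff_right\<close>)
    ultimately show ?thesis
      using perp_projector_insert_degenerate[OF P] True xinv V
      by (auto simp: u_def less_Suc_eq inner_diff_right)
  next
    case False
    define c where "c = (w l \<bullet> (b - A *v x1)) / (u \<bullet> u)"
    have eq: "x = x1 + c *\<^sub>R u" "S = S1 - (\<chi> i j. u $ i * u $ j / (u \<bullet> u))"
      using iter_Suc_perp_projector[OF it P _ False] Suc.prems by (auto simp: u_def v_def c_def)
    have "v k \<bullet> x = v k \<bullet> xs" if "k < Suc l" for k
    proof (cases "k = l")
      case True
      have "v l \<bullet> x = v l \<bullet> x1 + c * (u \<bullet> u)"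
        using perp_projector_inner_self[OF P, of "v l"] by (simp add: eq inner_add_right u_def)
      also have "c * (u \<bullet> u) = w l \<bullet> (b - A *v x1)" using False by (simp add: c_def)
      also have "\<dots> = v l \<bullet> xs - v l \<bullet> x1"
        by (simp add: sol[symmetric] v_def inner_diff_right dot_lmul_matrix[symmetric])
      finally show ?thesis using True by simp
    next
      case False
      then have "u \<bullet> v k = 0"
        using that perp_projector_orthogonal[OF P span_base] by (simp add: u_def)
      then show ?thesis using xinv that False by (simp add: eq inner_add_right inner_commute)
    qed
    then show ?thesis using perp_projector_insert[OF P u_def False] V eq by simp
  qed
qed

lemma iter_solves:
  fixes A :: "real^'d^'n"
  assumes sol: "A *v xs = b"
    and rows: "row_space A \<subseteq> span ((\<lambda>k. transpose A *v w k) ` {..<l})"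
  shows "A *v fst (iter A b w x0 l) = b"
proof -
  obtain x S where it: "iter A b w x0 l = (x, S)" by fastforce
  have "A $ i \<bullet> (x - xs) = 0" for i
  proof (rule span_inner_eq_0)
    have "A $ i \<in> row_space A"
      unfolding row_space_def rows_def row_def by (intro span_base) auto
    then show "A $ i \<in> span ((\<lambda>k. transpose A *v w k) ` {..<l})" using rows by blast
  qed (use iter_invariant[OF sol it] in \<open>auto simp: inner_diff_right\<close>)
  then show ?thesis
    using it sol by (auto simp: vec_eq_iff matrix_vector_mul_component inner_diff_right)
qed

lemma set_pmf_eq_of_sum_pmf_eq_1:
  assumes "finite S" and "\<forall>x\<in>S. pmf p x > 0" and "(\<Sum>x\<in>S. pmf p x) = 1"
  shows "set_pmf p = S"
proof
  show "S \<subseteq> set_pmf p" using assms(2) by (auto simp: set_pmf_eq')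
  have "measure_pmf.prob p S = 1"
    using assms by (simp add: measure_measure_pmf_finite)
  then have "measure_pmf.prob p (UNIV - S) = 0"
    using measure_pmf.prob_compl[of S p] by simp
  then show "set_pmf p \<subseteq> S" by (auto simp: measure_pmf_zero_iff)
qed

lemma range_sp_eq_span:
  fixes A :: "real^'d^'n"
  shows "range_sp p A = span ((\<lambda>v. transpose A *v v) ` set_pmf p)"
proof -
  let ?V = "(\<lambda>v. transpose A *v v) ` set_pmf p"
  have "{z. measure_pmf.prob p {v. z \<bullet> (transpose A *v v) = 0} = 1} = ?V\<^sup>\<bottom>"
    by (subst measure_pmf.prob_eq_1)
      (auto simp: AE_measure_pmf_iff orthogonal_comp_def orthogonal_def inner_commute
        simp del: transpose_matrix_vector)
  then have "null_sp p A = (span ?V)\<^sup>\<bottom>"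
    by (simp add: null_sp_def orthogonal_comp_span subspace_orthogonal_comp
        del: transpose_matrix_vector)
  then show ?thesis by (simp add: range_sp_def orthogonal_comp_self)
qed

lemma stop_time_le:
  assumes "range_sp p A \<subseteq> span ((\<lambda>l. transpose A *v w l) ` {..k})"
  shows "stop_time p A w \<le> k"
  using assms unfolding stop_time_def by (rule Least_le)

lemma range_sp_subset_span_stop_time:
  assumes "range_sp p A \<subseteq> span ((\<lambda>l. transpose A *v w l) ` {..k})"
  shows "range_sp p A \<subseteq> span ((\<lambda>l. transpose A *v w l) ` {..stop_time p A w})"
  using assms unfolding stop_time_def by (rule LeastI)

theorem mainTheorem7:
  fixes A :: "real^'d^'n" and b :: "real^'n"
    and N :: nat and W :: "nat \<Rightarrow> real^'n"
    and p :: "(real^'n) pmf" and w :: "nat \<Rightarrow> real^'n"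
  assumes consistent: "\<exists>x. A *v x = b"
    and distinct: "inj_on W {1..N}"
    and pos: "\<forall>j\<in>{1..N}. pmf p (W j) > 0"
    and sum1: "(\<Sum>j=1..N. pmf p (W j)) = 1"
    and sampling: "\<forall>m. \<exists>\<sigma>. bij_betw \<sigma> {..<N} {1..N} \<and>
                          (\<forall>i<N. w (m * N + i) = W (\<sigma> i))"
  shows "stop_time p A w \<le> N - 1
    \<and> (span ((\<lambda>j. transpose A *v W j) ` {1..N}) = row_space A \<longrightarrow>
         (\<forall>x0. A *v fst (iter A b w x0 (stop_time p A w + 1)) = b))
    \<and> (span (W ` {1..N}) = UNIV \<longrightarrow>
         span ((\<lambda>j. transpose A *v W j) ` {1..N}) = row_space A)"
proof -
  let ?V = "(\<lambda>j. transpose A *v W j) ` {1..N}"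
  let ?v = "\<lambda>k. transpose A *v w k"
  have "set_pmf p = W ` {1..N}"
    using distinct pos sum1 by (intro set_pmf_eq_of_sum_pmf_eq_1) (auto simp: sum.reindex)
  then have R: "range_sp p A = span ?V"
    by (simp add: range_sp_eq_span image_image del: transpose_matrix_vector)
  obtain \<sigma> where \<sigma>: "bij_betw \<sigma> {..<N} {1..N}" "\<forall>i<N. w i = W (\<sigma> i)"
    using sampling[rule_format, of 0] by auto
  have "N \<ge> 1" using sum1 by (cases N) auto
  then have "?v ` {..N - 1} = (\<lambda>j. transpose A *v W j) ` \<sigma> ` {..<N}"
    using \<sigma>(2) by (auto simp: image_image simp del: transpose_matrix_vector)
  then have "?v ` {..N - 1} = ?V"
    using \<sigma>(1) by (simp add: bij_betw_def)
  then have RN: "range_sp p A \<subseteq> span (?v ` {..N - 1})" using R by simp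
  have "A *v fst (iter A b w x0 (stop_time p A w + 1)) = b"
    if "span ?V = row_space A" for x0
    using consistent iter_solves range_sp_subset_span_stop_time[OF RN] that R
    by (metis Suc_eq_plus1 lessThan_Suc_atMost)
  then show ?thesis
    using stop_time_le[OF RN] span_transpose_image_eq_row_space[of "W ` {1..N}" A]
    by (simp add: image_image del: transpose_matrix_vector)
qed

end
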